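(* Let $V, K$ be positive integers and let $\mathbf{p}_1,\dots,\mathbf{p}_K \in [0,1]^V$ be vectors with entries $p_{ij}$. Define $p_i^{\mathrm{OPT}} = \prod_{j=1}^K p_{ij}$ for $i=1,\dots,V$ and $\mathrm{OPT} = \sum_{i=1}^V p_i^{\mathrm{OPT}}$. Then for every $\mathbf{b} \in [0,1]^V$ there exists $j \in \{1,\dots,K\}$ such that $$\sum_{i=1}^V p_{ij} b_i \;\le\; \Big(1-\frac{1}{K}\Big)\sum_{i=1}^V b_i + \frac{\mathrm{OPT}}{K}.$$
   Context: In the paper, $i$ indexes voxels of a map, $j$ indexes depth-measuring rays, $p_{ij}\in[0,1]$ is the (estimated) probability that voxel $i$ is not covered by ray $j$, and $\mathbf b$ is a vector of current per-voxel losses. *)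

theory Defs
  imports Main Complex_Main
begin

definition p_opt :: "nat \<Rightarrow> (nat \<Rightarrow> nat \<Rightarrow> real) \<Rightarrow> nat \<Rightarrow> real" where
  "p_opt K p i = (\<Prod>j=1..K. p i j)"

definition OPT :: "nat \<Rightarrow> nat \<Rightarrow> (nat \<Rightarrow> nat \<Rightarrow> real) \<Rightarrow> real" where
  "OPT V K p = (\<Sum>i=1..V. p_opt K p i)"

end

theory Submission
  imports Defs
begin

text \<open>Averaging over the rays: since \<open>\<Sum>\<^sub>j x\<^sub>j + 1 \<le> K + \<Prod>\<^sub>j x\<^sub>j\<close> for
  \<open>x\<^sub>j \<in> [0,1]\<close> and \<open>b\<^sub>i \<le> 1\<close>, the total \<open>\<Sum>\<^sub>j \<Sum>\<^sub>i p\<^sub>i\<^sub>j b\<^sub>i\<close> is at most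
  \<open>\<Sum>\<^sub>i ((K - 1) b\<^sub>i + p\<^sub>i\<^sup>OPT)\<close>, and some ray does no worse than the average,
  \<open>1/K\<close> of the total.\<close>

lemma sum_plus_one_le_card_plus_prod:
  fixes f :: "'a \<Rightarrow> real"
  assumes "finite A" "\<And>x. x \<in> A \<Longrightarrow> 0 \<le> f x \<and> f x \<le> 1"
  shows "sum f A + 1 \<le> real (card A) + prod f A"
  using assms
proof (induction A rule: finite_induct)
  case empty
  then show ?case by simp
next
  case (insert x A)
  have "0 \<le> f x" "f x \<le> 1" "0 \<le> prod f A" "prod f A \<le> 1"
    using insert.prems by (auto intro: prod_nonneg prod_le_1)
  then have "(1 - f x) * (1 - prod f A) \<ge> 0" by simp
  then show ?case using insert by (simp add: algebra_simps)
qed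

lemma mult_sum_le_card_minus_one_plus_prod:
  fixes f :: "'a \<Rightarrow> real" and c :: real
  assumes "finite A" "\<And>x. x \<in> A \<Longrightarrow> 0 \<le> f x \<and> f x \<le> 1" "0 \<le> c" "c \<le> 1"
  shows "c * sum f A \<le> (real (card A) - 1) * c + prod f A"
proof -
  have "sum f A \<le> real (card A) - 1 + prod f A"
    using sum_plus_one_le_card_plus_prod[of A f] assms(1,2) by simp
  then have "c * sum f A \<le> c * (real (card A) - 1 + prod f A)"
    using assms(3) by (rule mult_left_mono)
  also have "\<dots> = (real (card A) - 1) * c + c * prod f A" by (simp add: algebra_simps)
  also have "\<dots> \<le> (real (card A) - 1) * c + prod f A"
    using assms by (simp add: mult_left_le_one_le prod_nonneg)
  finally show ?thesis .
qed

lemma exists_le_average: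
  fixes f :: "'a \<Rightarrow> real"
  assumes "finite A" "A \<noteq> {}"
  shows "\<exists>x\<in>A. f x \<le> sum f A / real (card A)"
proof (rule ccontr)
  assume "\<not> ?thesis"
  then have "(\<Sum>x\<in>A. sum f A / real (card A)) < sum f A"
    using assms by (intro sum_strict_mono) auto
  then show False using assms by simp
qed

theorem lemma1:
  fixes V K :: nat and p :: "nat \<Rightarrow> nat \<Rightarrow> real" and b :: "nat \<Rightarrow> real"
  assumes "V > 0" and "K > 0"
    and "\<And>i j. i \<in> {1..V} \<Longrightarrow> j \<in> {1..K} \<Longrightarrow> 0 \<le> p i j \<and> p i j \<le> 1"
    and "\<And>i. i \<in> {1..V} \<Longrightarrow> 0 \<le> b i \<and> b i \<le> 1"
  shows "\<exists>j \<in> {1..K}. (\<Sum>i=1..V. p i j * b i)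
           \<le> (1 - 1 / real K) * (\<Sum>i=1..V. b i) + OPT V K p / real K"
proof -
  obtain j where j: "j \<in> {1..K}"
    and le_avg: "(\<Sum>i=1..V. p i j * b i) \<le> (\<Sum>j=1..K. \<Sum>i=1..V. p i j * b i) / real K"
    using exists_le_average[of "{1..K}" "\<lambda>j. \<Sum>i=1..V. p i j * b i"] \<open>K > 0\<close> by auto
  have "(\<Sum>j=1..K. \<Sum>i=1..V. p i j * b i) = (\<Sum>i=1..V. b i * (\<Sum>j=1..K. p i j))"
    by (subst sum.swap) (simp add: sum_distrib_left mult.commute)
  also have "\<dots> \<le> (\<Sum>i=1..V. (real K - 1) * b i + p_opt K p i)"
    using assms(3,4) mult_sum_le_card_minus_one_plus_prod[of "{1..K}" "p _"]
    by (intro sum_mono) (simp add: p_opt_def)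
  also have "\<dots> = (real K - 1) * (\<Sum>i=1..V. b i) + OPT V K p"
    by (simp add: sum.distrib sum_distrib_left OPT_def)
  finally have "(\<Sum>i=1..V. p i j * b i) \<le> ((real K - 1) * (\<Sum>i=1..V. b i) + OPT V K p) / real K"
    using le_avg divide_right_mono[of _ _ "real K"] by (meson order_trans of_nat_0_le_iff)
  also have "\<dots> = (1 - 1 / real K) * (\<Sum>i=1..V. b i) + OPT V K p / real K"
    using \<open>K > 0\<close> by (simp add: field_simps)
  finally show ?thesis using j by blast
qed

end
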